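(* Let $H$ be a complex infinite-dimensional separable Hilbert space and let $(f_n)_{n=1}^\infty$ be a Bessel sequence in $H$ with optimal Bessel bound $B$ and analysis operator $U$, such that there is a Bessel sequence with analysis operator $V$ for which $I-V^*U$ is compact. Then $d=\dim\operatorname{Ker}U<\infty$, any finite sequence $(x_n)_{n=1}^k$ with $(x_n)_{n=1}^k\cup(f_n)_{n=1}^\infty$ a frame for $H$ satisfies $k\ge d$, and if $(w_1,\dots,w_d)$ is an orthonormal basis of $\operatorname{Ker}U$ then $(\sqrt B w_n)_{n=1}^d\cup(f_n)_{n=1}^\infty$ is a frame for $H$.
   Context: Bessel sequence, frame, optimal Bessel bound as usual; the analysis operator is $U:H\to\ell^2$, $Ux=(\langle x,f_n\rangle)_n$. The notation $(x_n)_{n=1}^k\cup(f_n)_{n=1}^\infty$ denotes the sequence $x_1,\dots,x_k,f_1,f_2,\dots$. *)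

theory Defs
  imports "HOL-Analysis.Analysis"
begin

text \<open>HOL-Analysis only provides real inner product spaces.\<close>

class complex_vector = real_vector +
  fixes scaleC :: "complex \<Rightarrow> 'a \<Rightarrow> 'a" (infixr \<open>*\<^sub>C\<close> 75)
  assumes scaleC_add_right: "a *\<^sub>C (x + y) = a *\<^sub>C x + a *\<^sub>C y"
    and scaleC_add_left: "(a + b) *\<^sub>C x = a *\<^sub>C x + b *\<^sub>C x"
    and scaleC_scaleC: "a *\<^sub>C (b *\<^sub>C x) = (a * b) *\<^sub>C x"
    and scaleC_one: "1 *\<^sub>C x = x"
    and scaleR_scaleC: "scaleR r x = complex_of_real r *\<^sub>C x"

class complex_inner = complex_vector + real_normed_vector +
  fixes cinner :: "'a \<Rightarrow> 'a \<Rightarrow> complex"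
  assumes cinner_commute: "cinner x y = cnj (cinner y x)"
    and cinner_add_left: "cinner (x + y) z = cinner x z + cinner y z"
    and cinner_scaleC_left: "cinner (a *\<^sub>C x) y = a * cinner x y"
    and cinner_self_real_nonneg: "Im (cinner x x) = 0 \<and> 0 \<le> Re (cinner x x)"
    and cinner_eq_zero_iff: "cinner x x = 0 \<longleftrightarrow> x = 0"
    and norm_eq_sqrt_cinner: "norm x = sqrt (Re (cinner x x))"

text \<open>A complex Hilbert space: a complete complex inner product space
(type class constraint complex_inner plus complete_space).\<close>

definition cspan :: "'a::complex_vector set \<Rightarrow> 'a set" where
  "cspan S = {y. \<exists>T c. finite T \<and> T \<subseteq> S \<and> y = (\<Sum>x\<in>T. c x *\<^sub>C x)}"

definition fin_dim :: "'a::complex_vector set \<Rightarrow> bool" where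
  "fin_dim K \<longleftrightarrow> (\<exists>S. finite S \<and> S \<subseteq> K \<and> cspan S = K)"

definition cdim :: "'a::complex_vector set \<Rightarrow> nat" where
  "cdim K = (LEAST n. \<exists>S. finite S \<and> S \<subseteq> K \<and> card S = n \<and> cspan S = K)"

definition separable_space :: "'a::topological_space itself \<Rightarrow> bool" where
  "separable_space _ \<longleftrightarrow> (\<exists>D::'a set. countable D \<and> closure D = UNIV)"

definition infinite_dimensional :: "'a::complex_vector itself \<Rightarrow> bool" where
  "infinite_dimensional _ \<longleftrightarrow> \<not> fin_dim (UNIV :: 'a set)"

definition analysis_op :: "(nat \<Rightarrow> 'a::complex_inner) \<Rightarrow> 'a \<Rightarrow> (nat \<Rightarrow> complex)" where
  "analysis_op f x = (\<lambda>n. cinner x (f n))"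

definition bessel_bound :: "(nat \<Rightarrow> 'a::complex_inner) \<Rightarrow> real \<Rightarrow> bool" where
  "bessel_bound f B \<longleftrightarrow>
     (\<forall>x. summable (\<lambda>n. (cmod (cinner x (f n)))\<^sup>2) \<and>
          (\<Sum>n. (cmod (cinner x (f n)))\<^sup>2) \<le> B * (norm x)\<^sup>2)"

definition bessel_seq :: "(nat \<Rightarrow> 'a::complex_inner) \<Rightarrow> bool" where
  "bessel_seq f \<longleftrightarrow> (\<exists>B. bessel_bound f B)"

definition optimal_bessel_bound :: "(nat \<Rightarrow> 'a::complex_inner) \<Rightarrow> real \<Rightarrow> bool" where
  "optimal_bessel_bound f B \<longleftrightarrow> bessel_bound f B \<and> (\<forall>B'. bessel_bound f B' \<longrightarrow> B \<le> B')"

definition frame :: "(nat \<Rightarrow> 'a::complex_inner) \<Rightarrow> bool" where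
  "frame f \<longleftrightarrow> (\<exists>A B. 0 < A \<and>
     (\<forall>x. summable (\<lambda>n. (cmod (cinner x (f n)))\<^sup>2) \<and>
          A * (norm x)\<^sup>2 \<le> (\<Sum>n. (cmod (cinner x (f n)))\<^sup>2) \<and>
          (\<Sum>n. (cmod (cinner x (f n)))\<^sup>2) \<le> B * (norm x)\<^sup>2))"

text \<open>Adjoint of the analysis operator of g (the synthesis operator):
V^* c = sum_n c_n g_n.\<close>
definition synthesis_op :: "(nat \<Rightarrow> 'a::complex_inner) \<Rightarrow> (nat \<Rightarrow> complex) \<Rightarrow> 'a" where
  "synthesis_op g c = (\<Sum>n. c n *\<^sub>C g n)"

definition compact_operator :: "('a::real_normed_vector \<Rightarrow> 'b::real_normed_vector) \<Rightarrow> bool" where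
  "compact_operator T \<longleftrightarrow> (\<forall>S. bounded S \<longrightarrow> compact (closure (T ` S)))"

text \<open>The sequence x_1,...,x_k,f_1,f_2,... (0-indexed: x 0, ..., x (k-1), f 0, f 1, ...).\<close>
definition prepend_seq :: "nat \<Rightarrow> (nat \<Rightarrow> 'a) \<Rightarrow> (nat \<Rightarrow> 'a) \<Rightarrow> (nat \<Rightarrow> 'a)" where
  "prepend_seq k x f = (\<lambda>n. if n < k then x n else f (n - k))"

definition orthonormal_basis_of :: "nat \<Rightarrow> (nat \<Rightarrow> 'a::complex_inner) \<Rightarrow> 'a set \<Rightarrow> bool" where
  "orthonormal_basis_of d w K \<longleftrightarrow>
     (\<forall>i<d. w i \<in> K) \<and>
     (\<forall>i<d. \<forall>j<d. cinner (w i) (w j) = (if i = j then 1 else 0)) \<and>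
     cspan (w ` {..<d}) = K"

end

theory Submission
  imports Defs "HOL-Analysis.L2_Norm"
begin

text \<open>The operator \<open>T = I - V\<^sup>*U\<close> is compact and is the identity on \<open>Ker U\<close>, so by Riesz's
  lemma \<open>Ker U\<close> is finite-dimensional. If \<open>x\<^sub>1, \<dots>, x\<^sub>k\<close> complete \<open>(f\<^sub>n)\<close> to a frame, the
  projections of the \<open>x\<^sub>j\<close> onto \<open>Ker U\<close> span it, since a kernel vector orthogonal to them is
  orthogonal to the whole frame; hence \<open>k \<ge> dim Ker U\<close>.
  Conversely, compactness of \<open>T\<close> gives \<open>\<parallel>Ux\<parallel>\<^sup>2 \<ge> c \<parallel>x\<parallel>\<^sup>2\<close> on the orthogonal complement of
  \<open>Ker U\<close>: otherwise unit vectors \<open>u\<^sub>n\<close> there with \<open>Uu\<^sub>n \<rightarrow> 0\<close> have a convergent subsequence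
  of \<open>u\<^sub>n = Tu\<^sub>n + V\<^sup>*Uu\<^sub>n\<close>, whose limit is a unit vector both in and orthogonal to \<open>Ker U\<close>.
  Decomposing \<open>x\<close> along \<open>Ker U\<close>, the sequence \<open>(\<surd>B w\<^sub>n) \<union> (f\<^sub>n)\<close> then has lower frame
  bound \<open>min B c\<close> and upper frame bound \<open>2B\<close>.\<close>

section \<open>Complex inner product spaces\<close>

lemma scaleC_zero_left [simp]: "(0::complex) *\<^sub>C (x::'a::complex_vector) = 0"
  by (metis scaleR_scaleC of_real_0 scale_zero_left)

lemma scaleC_zero_right [simp]: "a *\<^sub>C (0::'a::complex_vector) = 0"
  by (metis add_cancel_right_right add_0 scaleC_add_right)

lemma scaleC_sum_right: "a *\<^sub>C sum h A = (\<Sum>i\<in>A. a *\<^sub>C (h i::'a::complex_vector))"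
  by (induction A rule: infinite_finite_induct) (auto simp: scaleC_add_right)

lemma cinner_zero_left [simp]: "cinner 0 (y::'a::complex_inner) = 0"
  by (metis add_cancel_right_right add_0 cinner_add_left)

lemma cinner_scaleR_left: "cinner (r *\<^sub>R x) (y::'a::complex_inner) = complex_of_real r * cinner x y"
  by (simp add: scaleR_scaleC cinner_scaleC_left)

lemma cinner_minus_left: "cinner (- x) (y::'a::complex_inner) = - cinner x y"
proof -
  have "cinner (- x) y + cinner x y = 0"
    by (simp only: cinner_add_left[symmetric] add.left_inverse cinner_zero_left)
  then show ?thesis by (simp add: eq_neg_iff_add_eq_0)
qed

lemma cinner_diff_left: "cinner (x - z) (y::'a::complex_inner) = cinner x y - cinner z y"
  by (simp only: diff_conv_add_uminus cinner_add_left cinner_minus_left)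

lemma cinner_sum_left: "cinner (sum h A) (y::'a::complex_inner) = (\<Sum>i\<in>A. cinner (h i) y)"
  by (induction A rule: infinite_finite_induct) (auto simp: cinner_add_left)

lemma cnj_cinner: "cnj (cinner (x::'a::complex_inner) y) = cinner y x"
  by (simp only: cinner_commute[of y x] complex_cnj_cnj)

lemma cinner_eq_0_sym: "cinner (x::'a::complex_inner) y = 0 \<longleftrightarrow> cinner y x = 0"
  by (metis cnj_cinner complex_cnj_zero)

lemma cinner_zero_right [simp]: "cinner (x::'a::complex_inner) 0 = 0"
  by (simp only: cinner_commute[of x 0] cinner_zero_left complex_cnj_zero)

lemma cinner_scaleC_right: "cinner (x::'a::complex_inner) (a *\<^sub>C y) = cnj a * cinner x y"
  by (simp only: cinner_commute[of x "a *\<^sub>C y"] cinner_scaleC_left complex_cnj_mult cnj_cinner)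

lemma cinner_scaleR_right: "cinner (x::'a::complex_inner) (r *\<^sub>R y) = complex_of_real r * cinner x y"
  by (simp add: scaleR_scaleC cinner_scaleC_right)

lemma cinner_diff_right: "cinner (x::'a::complex_inner) (y - z) = cinner x y - cinner x z"
  by (simp only: cinner_commute[of x "y-z"] cinner_diff_left complex_cnj_diff cnj_cinner)

lemma cinner_add_right: "cinner (x::'a::complex_inner) (y + z) = cinner x y + cinner x z"
  by (simp only: cinner_commute[of x "y+z"] cinner_add_left complex_cnj_add cnj_cinner)

lemma cinner_self: "cinner (x::'a::complex_inner) x = complex_of_real ((norm x)\<^sup>2)"
proof -
  have "Im (cinner x x) = 0" "0 \<le> Re (cinner x x)" using cinner_self_real_nonneg by auto
  moreover have "(norm x)\<^sup>2 = Re (cinner x x)"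
    using norm_eq_sqrt_cinner[of x] \<open>0 \<le> Re (cinner x x)\<close> by (metis real_sqrt_pow2)
  ultimately show ?thesis by (simp add: complex_eq_iff)
qed

lemma norm_cinner_le: "cmod (cinner (x::'a::complex_inner) y) \<le> norm x * norm y"
proof (cases "y = 0")
  case True
  then show ?thesis by simp
next
  case False
  define c where "c = cinner x y"
  define t where "t = c / complex_of_real ((norm y)\<^sup>2)"
  have "cinner (x - t *\<^sub>C y) (x - t *\<^sub>C y)
      = cinner x x - cnj t * c - t * cnj c + t * cnj t * complex_of_real ((norm y)\<^sup>2)"
    using cinner_commute[of y x]
    by (simp add: cinner_diff_left cinner_diff_right cinner_scaleC_left cinner_scaleC_right
        cinner_self[of y] c_def algebra_simps)
  also have "\<dots> = complex_of_real ((norm x)\<^sup>2 - (cmod c)\<^sup>2 / (norm y)\<^sup>2)"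
  proof -
    have "c * cnj c = complex_of_real ((cmod c)\<^sup>2)" using complex_norm_square[of c] by simp
    then show ?thesis using False unfolding t_def by (simp add: cinner_self field_simps)
  qed
  finally have "complex_of_real ((norm (x - t *\<^sub>C y))\<^sup>2)
      = complex_of_real ((norm x)\<^sup>2 - (cmod c)\<^sup>2 / (norm y)\<^sup>2)"
    by (simp only: cinner_self)
  then have "0 \<le> (norm x)\<^sup>2 - (cmod c)\<^sup>2 / (norm y)\<^sup>2"
    by (metis of_real_eq_iff zero_le_power2)
  then have "(cmod c)\<^sup>2 \<le> (norm x * norm y)\<^sup>2"
    using False by (simp add: field_simps)
  then show ?thesis unfolding c_def by (rule power2_le_imp_le) simp
qed

lemma norm_add_sq_orthogonal:
  assumes "cinner a b = 0"
  shows "(norm (a + b))\<^sup>2 = (norm a)\<^sup>2 + (norm (b::'a::complex_inner))\<^sup>2"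
proof -
  have "cinner (a + b) (a + b) = cinner a a + cinner b b"
    using assms cinner_eq_0_sym[of a b] by (simp add: cinner_add_left cinner_add_right)
  then have "complex_of_real ((norm (a + b))\<^sup>2) = complex_of_real ((norm a)\<^sup>2 + (norm b)\<^sup>2)"
    by (simp only: cinner_self of_real_add)
  then show ?thesis by (simp only: of_real_eq_iff)
qed

lemma bounded_linear_cinner_left: "bounded_linear (\<lambda>x. cinner (x::'a::complex_inner) e)"
proof (rule bounded_linear_intro[where K = "norm e"])
  show "cinner (x + y) e = cinner x e + cinner y e" for x y by (rule cinner_add_left)
  show "cinner (r *\<^sub>R x) e = r *\<^sub>R cinner x e" for r x
    by (simp add: cinner_scaleR_left scaleR_conv_of_real)
  show "norm (cinner x e) \<le> norm x * norm e" for x by (rule norm_cinner_le)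
qed

lemma tendsto_cinner_left: "u \<longlonglongrightarrow> l \<Longrightarrow> (\<lambda>n. cinner (u n) e) \<longlonglongrightarrow> cinner (l::'a::complex_inner) e"
  by (rule bounded_linear.tendsto[OF bounded_linear_cinner_left])

section \<open>Spans and finite orthonormal systems\<close>

definition csubspace :: "'a::complex_vector set \<Rightarrow> bool" where
  "csubspace K \<longleftrightarrow> 0 \<in> K \<and> (\<forall>x\<in>K. \<forall>y\<in>K. x + y \<in> K) \<and> (\<forall>a. \<forall>x\<in>K. a *\<^sub>C x \<in> K)"

lemma csubspace_add: "csubspace K \<Longrightarrow> x \<in> K \<Longrightarrow> y \<in> K \<Longrightarrow> x + y \<in> K"
  by (simp add: csubspace_def)

lemma csubspace_scaleC: "csubspace K \<Longrightarrow> x \<in> K \<Longrightarrow> a *\<^sub>C x \<in> K"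
  by (simp add: csubspace_def)

lemma csubspace_scaleR: "csubspace K \<Longrightarrow> x \<in> K \<Longrightarrow> r *\<^sub>R x \<in> K"
  by (simp add: csubspace_def scaleR_scaleC)

lemma csubspace_diff: "csubspace K \<Longrightarrow> x \<in> K \<Longrightarrow> y \<in> K \<Longrightarrow> x - y \<in> K"
  using csubspace_add[of K x "(-1) *\<^sub>R y"] csubspace_scaleR[of K y "-1"] by simp

lemma csubspace_sum: "csubspace K \<Longrightarrow> (\<And>i. i \<in> A \<Longrightarrow> h i \<in> K) \<Longrightarrow> sum h A \<in> K"
  by (induction A rule: infinite_finite_induct) (auto simp: csubspace_def)

lemma cspanI: "finite T \<Longrightarrow> T \<subseteq> S \<Longrightarrow> y = (\<Sum>x\<in>T. c x *\<^sub>C x) \<Longrightarrow> y \<in> cspan S"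
  unfolding cspan_def by blast

lemma cspanE:
  assumes "y \<in> cspan S"
  obtains T c where "finite T" "T \<subseteq> S" "y = (\<Sum>x\<in>T. c x *\<^sub>C x)"
  using assms unfolding cspan_def by blast

lemma cspan_superset: "S \<subseteq> cspan S"
proof
  fix s assume "s \<in> S"
  then show "s \<in> cspan S" by (intro cspanI[of "{s}" _ _ "\<lambda>_. 1"]) (simp_all add: scaleC_one)
qed

lemma cspan_mono: "S \<subseteq> S' \<Longrightarrow> cspan S \<subseteq> cspan S'"
  unfolding cspan_def by blast

lemma cspan_subset: "csubspace K \<Longrightarrow> S \<subseteq> K \<Longrightarrow> cspan S \<subseteq> K"
  unfolding cspan_def by (auto intro!: csubspace_sum csubspace_scaleC)

lemma sum_scaleC_extend:
  assumes "finite T'" "T \<subseteq> T'"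
  shows "(\<Sum>v\<in>T. c v *\<^sub>C v) = (\<Sum>v\<in>T'. (if v \<in> T then c v else 0) *\<^sub>C (v::'a::complex_vector))"
proof -
  have "(\<Sum>v\<in>T'. (if v \<in> T then c v else 0) *\<^sub>C v) = (\<Sum>v\<in>T'. if v \<in> T then c v *\<^sub>C v else 0)"
    by (rule sum.cong) simp_all
  also have "\<dots> = (\<Sum>v\<in>T' \<inter> T. c v *\<^sub>C v)" by (rule sum.inter_restrict[OF assms(1), symmetric])
  finally show ?thesis using assms(2) by (simp add: Int_absorb1)
qed

lemma csubspace_cspan: "csubspace (cspan S)"
  unfolding csubspace_def
proof (intro conjI ballI allI)
  show "0 \<in> cspan S" by (rule cspanI[of "{}"]) simp_all
next
  fix x y assume "x \<in> cspan S" "y \<in> cspan S"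
  then obtain T1 c1 T2 c2 where t: "finite T1" "T1 \<subseteq> S" "x = (\<Sum>v\<in>T1. c1 v *\<^sub>C v)"
    "finite T2" "T2 \<subseteq> S" "y = (\<Sum>v\<in>T2. c2 v *\<^sub>C v)"
    by (metis cspanE)
  have "x + y = (\<Sum>v\<in>T1 \<union> T2. ((if v \<in> T1 then c1 v else 0) + (if v \<in> T2 then c2 v else 0)) *\<^sub>C v)"
    using t sum_scaleC_extend[of "T1 \<union> T2" T1 c1] sum_scaleC_extend[of "T1 \<union> T2" T2 c2]
    by (simp add: scaleC_add_left sum.distrib)
  then show "x + y \<in> cspan S" using t by (intro cspanI) auto
next
  fix a x assume "x \<in> cspan S"
  then obtain T c where t: "finite T" "T \<subseteq> S" "x = (\<Sum>v\<in>T. c v *\<^sub>C v)" by (rule cspanE)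
  then have "a *\<^sub>C x = (\<Sum>v\<in>T. (a * c v) *\<^sub>C v)" by (simp add: scaleC_sum_right scaleC_scaleC)
  then show "a *\<^sub>C x \<in> cspan S" using t by (intro cspanI)
qed

lemma cspan_eqI: "A \<subseteq> cspan B \<Longrightarrow> B \<subseteq> cspan A \<Longrightarrow> cspan A = cspan B"
  by (intro subset_antisym cspan_subset[OF csubspace_cspan])

lemma cspan_insert_cong:
  assumes "cspan A = cspan B"
  shows "cspan (insert s A) = cspan (insert s B)"
proof (rule cspan_eqI)
  show "insert s A \<subseteq> cspan (insert s B)"
    using assms cspan_superset[of A] cspan_superset[of "insert s B"] cspan_mono[of B "insert s B"]
    by blast
  show "insert s B \<subseteq> cspan (insert s A)"
    using assms cspan_superset[of B] cspan_superset[of "insert s A"] cspan_mono[of A "insert s A"]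
    by blast
qed

lemma cinner_cspan_eq_0:
  assumes "\<And>e. e \<in> E \<Longrightarrow> cinner x e = 0" "y \<in> cspan E"
  shows "cinner x y = 0"
proof -
  obtain T c where t: "finite T" "T \<subseteq> E" "y = (\<Sum>v\<in>T. c v *\<^sub>C v)" using assms(2) by (rule cspanE)
  have "cinner y x = (\<Sum>v\<in>T. c v * cinner v x)" using t by (simp add: cinner_sum_left cinner_scaleC_left)
  also have "\<dots> = 0"
  proof (intro sum.neutral ballI)
    fix v assume "v \<in> T"
    then have "cinner v x = 0" using t(2) assms(1) cinner_eq_0_sym[of x v] by blast
    then show "c v * cinner v x = 0" by simp
  qed
  finally show ?thesis using cinner_eq_0_sym[of y x] by blast
qed

lemma cdim_le_card: "finite S \<Longrightarrow> S \<subseteq> K \<Longrightarrow> cspan S = K \<Longrightarrow> cdim K \<le> card S"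
  unfolding cdim_def by (rule Least_le) blast

definition orthonormal :: "'a::complex_inner set \<Rightarrow> bool" where
  "orthonormal E \<longleftrightarrow> finite E \<and> (\<forall>e\<in>E. cinner e e = 1) \<and> (\<forall>e\<in>E. \<forall>e'\<in>E. e \<noteq> e' \<longrightarrow> cinner e e' = 0)"

definition proj :: "'a::complex_inner set \<Rightarrow> 'a \<Rightarrow> 'a" where
  "proj E y = (\<Sum>e\<in>E. cinner y e *\<^sub>C e)"

lemma proj_in_cspan: "finite E \<Longrightarrow> proj E y \<in> cspan E"
  unfolding proj_def by (rule cspanI) simp_all

lemma cinner_proj: assumes "orthonormal E" "e \<in> E" shows "cinner (proj E y) e = cinner y e"
proof -
  have "cinner (proj E y) e = (\<Sum>e'\<in>E. cinner y e' * cinner e' e)"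
    unfolding proj_def by (simp add: cinner_sum_left cinner_scaleC_left)
  also have "\<dots> = (\<Sum>e'\<in>E. if e' = e then cinner y e else 0)"
    using assms unfolding orthonormal_def by (intro sum.cong) auto
  finally show ?thesis using assms unfolding orthonormal_def by simp
qed

lemma cinner_proj_residual: "orthonormal E \<Longrightarrow> e \<in> E \<Longrightarrow> cinner (y - proj E y) e = 0"
  by (simp add: cinner_diff_left cinner_proj)

lemma norm_proj_sq:
  assumes "orthonormal E"
  shows "(norm (proj E y))\<^sup>2 = (\<Sum>e\<in>E. (cmod (cinner y e))\<^sup>2)"
proof -
  have "cinner (proj E y) p = (\<Sum>e\<in>E. cinner y e * cinner e p)" for p
    unfolding proj_def by (simp add: cinner_sum_left cinner_scaleC_left)
  then have "cinner (proj E y) (proj E y) = (\<Sum>e\<in>E. cinner y e * cinner e (proj E y))" .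
  also have "\<dots> = (\<Sum>e\<in>E. complex_of_real ((cmod (cinner y e))\<^sup>2))"
  proof (intro sum.cong refl)
    fix e assume "e \<in> E"
    then have "cinner e (proj E y) = cnj (cinner y e)"
      using cinner_proj[OF assms] cnj_cinner[of "proj E y" e] by simp
    then show "cinner y e * cinner e (proj E y) = complex_of_real ((cmod (cinner y e))\<^sup>2)"
      using complex_norm_square[of "cinner y e"] by simp
  qed
  finally have "complex_of_real ((norm (proj E y))\<^sup>2) = complex_of_real (\<Sum>e\<in>E. (cmod (cinner y e))\<^sup>2)"
    by (simp only: cinner_self of_real_sum)
  then show ?thesis by (simp only: of_real_eq_iff)
qed

lemma norm_sq_proj_decomp:
  assumes "orthonormal E"
  shows "(norm y)\<^sup>2 = (\<Sum>e\<in>E. (cmod (cinner y e))\<^sup>2) + (norm (y - proj E y))\<^sup>2"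
proof -
  have "finite E" using assms unfolding orthonormal_def by simp
  then have "cinner (y - proj E y) (proj E y) = 0"
    using cinner_cspan_eq_0[of E "y - proj E y" "proj E y"] cinner_proj_residual[OF assms]
      proj_in_cspan by blast
  then have "cinner (proj E y) (y - proj E y) = 0"
    using cinner_eq_0_sym[of "y - proj E y" "proj E y"] by blast
  then have "(norm (proj E y + (y - proj E y)))\<^sup>2 = (norm (proj E y))\<^sup>2 + (norm (y - proj E y))\<^sup>2"
    by (rule norm_add_sq_orthogonal)
  then show ?thesis by (simp add: norm_proj_sq[OF assms])
qed

lemma bessel_inequality_finite: "orthonormal E \<Longrightarrow> (\<Sum>e\<in>E. (cmod (cinner y e))\<^sup>2) \<le> (norm y)\<^sup>2"
  using norm_sq_proj_decomp[of E y] by simp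

lemma orthonormal_insert_residual:
  assumes E: "orthonormal E" and y: "y \<notin> cspan E"
  defines "u \<equiv> (1 / norm (y - proj E y)) *\<^sub>R (y - proj E y)"
  shows "orthonormal (insert u E)" "u \<notin> E" "cspan (insert u E) = cspan (insert y E)"
proof -
  define z where "z = y - proj E y"
  have fE: "finite E" using E unfolding orthonormal_def by simp
  have z0: "z \<noteq> 0" using y proj_in_cspan[OF fE, of y] unfolding z_def by auto
  have uu: "cinner u u = 1"
    using z0 unfolding u_def z_def[symmetric]
    by (simp add: cinner_scaleR_left cinner_scaleR_right cinner_self power2_eq_square)
  have ue: "cinner u e = 0" if "e \<in> E" for e
    by (simp add: u_def cinner_scaleR_left cinner_proj_residual[OF E that])
  then have eu: "cinner e u = 0" if "e \<in> E" for e
    using that cinner_eq_0_sym[of e u] by blast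
  show "orthonormal (insert u E)" using E uu ue eu unfolding orthonormal_def by auto
  show "u \<notin> E"
  proof
    assume "u \<in> E"
    then show False using uu ue[of u] by simp
  qed
  have p_span: "proj E y \<in> cspan (insert v E)" for v
    using proj_in_cspan[OF fE] cspan_mono[OF subset_insertI] by blast
  have u_span: "u \<in> cspan (insert y E)"
    unfolding u_def using cspan_superset[of "insert y E"] p_span[of y]
    by (intro csubspace_scaleR[OF csubspace_cspan] csubspace_diff[OF csubspace_cspan]) auto
  have "norm z *\<^sub>R u = z" using z0 by (simp add: u_def z_def[symmetric])
  then have y_eq: "y = norm z *\<^sub>R u + proj E y" by (simp add: z_def)
  have "norm z *\<^sub>R u \<in> cspan (insert u E)"
    using cspan_superset[of "insert u E"] by (intro csubspace_scaleR[OF csubspace_cspan]) auto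
  then have "norm z *\<^sub>R u + proj E y \<in> cspan (insert u E)"
    by (rule csubspace_add[OF csubspace_cspan _ p_span])
  then have y_span: "y \<in> cspan (insert u E)" by (simp only: y_eq[symmetric])
  have "insert u E \<subseteq> cspan (insert y E)" "insert y E \<subseteq> cspan (insert u E)"
    using u_span y_span cspan_superset[of "insert u E"] cspan_superset[of "insert y E"] by auto
  then show "cspan (insert u E) = cspan (insert y E)" by (rule cspan_eqI)
qed

lemma gram_schmidt: "finite S \<Longrightarrow> \<exists>E. orthonormal E \<and> cspan E = cspan S"
proof (induction S rule: finite_induct)
  case empty
  show ?case by (intro exI[of _ "{}"]) (simp add: orthonormal_def)
next
  case (insert s S)
  then obtain E where E: "orthonormal E" "cspan E = cspan S" by blast
  show ?case
  proof (cases "s \<in> cspan E")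
    case True
    have "E \<subseteq> cspan (insert s S)"
      using E(2) cspan_superset[of E] cspan_mono[of S "insert s S"] by blast
    moreover have "insert s S \<subseteq> cspan E" using True E(2) cspan_superset[of S] by blast
    ultimately have "cspan E = cspan (insert s S)" by (intro cspan_eqI)
    then show ?thesis using E(1) by blast
  next
    case False
    then show ?thesis
      using orthonormal_insert_residual[OF E(1) False] cspan_insert_cong[OF E(2)] by blast
  qed
qed

lemma exists_orthogonal_in_csubspace:
  assumes K: "csubspace K" and S: "finite S" "S \<subseteq> K" "cspan S \<noteq> K"
  obtains z where "z \<in> K" "z \<noteq> 0" "\<And>s. s \<in> S \<Longrightarrow> cinner z s = 0"
proof -
  obtain E where E: "orthonormal E" "cspan E = cspan S" using gram_schmidt[OF S(1)] by blast
  obtain y where y: "y \<in> K" "y \<notin> cspan E" using S E(2) cspan_subset[OF K] by blast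
  define u where "u = (1 / norm (y - proj E y)) *\<^sub>R (y - proj E y)"
  note ins = orthonormal_insert_residual[OF E(1) y(2), folded u_def]
  have "insert y E \<subseteq> K"
    using y(1) E(2) cspan_subset[OF K S(2)] cspan_superset[of E] by blast
  then have "cspan (insert y E) \<subseteq> K" by (rule cspan_subset[OF K])
  then have "u \<in> K" using ins(3) cspan_superset[of "insert u E"] by blast
  moreover have "u \<noteq> 0" using ins(1) unfolding orthonormal_def by auto
  moreover have "cinner u s = 0" if "s \<in> S" for s
  proof (rule cinner_cspan_eq_0)
    show "cinner u e = 0" if "e \<in> E" for e using ins(1,2) that unfolding orthonormal_def by auto
    show "s \<in> cspan E" using \<open>s \<in> S\<close> E(2) cspan_superset[of S] by blast
  qed
  ultimately show ?thesis by (rule that)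
qed

lemma exists_orthonormal_subset_card:
  assumes K: "csubspace K" and nf: "\<not> fin_dim K"
  shows "\<exists>E. orthonormal E \<and> E \<subseteq> K \<and> card E = n"
proof (induction n)
  case 0
  show ?case by (intro exI[of _ "{}"]) (simp add: orthonormal_def)
next
  case (Suc n)
  then obtain E where E: "orthonormal E" "E \<subseteq> K" "card E = n" by blast
  have fE: "finite E" using E unfolding orthonormal_def by simp
  then obtain y where y: "y \<in> K" "y \<notin> cspan E"
    using nf E(2) cspan_subset[OF K] unfolding fin_dim_def by blast
  define u where "u = (1 / norm (y - proj E y)) *\<^sub>R (y - proj E y)"
  note ins = orthonormal_insert_residual[OF E(1) y(2), folded u_def]
  have "u \<in> K"
    using ins(3) cspan_superset[of "insert u E"] cspan_subset[OF K, of "insert y E"] y(1) E(2) by blast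
  then show ?case using ins E fE by (intro exI[of _ "insert u E"]) auto
qed

lemma orthonormal_dist:
  assumes "orthonormal E" "e \<in> E" "e' \<in> E" "e \<noteq> e'"
  shows "1 \<le> dist e e'"
proof -
  have "cinner (e - e') (e - e') = 2"
    using assms unfolding orthonormal_def by (simp add: cinner_diff_left cinner_diff_right)
  then have "(dist e e')\<^sup>2 = 2" by (simp only: dist_norm cinner_self) (metis of_real_eq_iff of_real_numeral)
  then have "1\<^sup>2 \<le> (dist e e')\<^sup>2" by simp
  then show ?thesis by (rule power2_le_imp_le) simp
qed

text \<open>Riesz: the closed unit ball of an infinite-dimensional subspace contains arbitrarily many
  points at mutual distance at least 1, so it cannot be covered by finitely many balls of
  radius 1/2.\<close>

lemma fin_dim_if_compact_operator_fixes:
  fixes T :: "'a::complex_inner \<Rightarrow> 'a"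
  assumes K: "csubspace K" and T: "compact_operator T" and T_id: "\<And>x. x \<in> K \<Longrightarrow> T x = x"
  shows "fin_dim K"
proof (rule ccontr)
  assume nf: "\<not> fin_dim K"
  define S where "S = {x \<in> K. norm x \<le> 1}"
  have "bounded S" unfolding S_def by (rule boundedI[of _ 1]) simp
  then have "compact (closure (T ` S))" using T unfolding compact_operator_def by blast
  moreover have "T ` S = S" using T_id unfolding S_def by force
  ultimately have "compact (closure S)" by simp
  then obtain C where C: "finite C" "closure S \<subseteq> (\<Union>c\<in>C. ball c (1/2))"
    by (rule compactE_image[of "closure S" "closure S" "\<lambda>c. ball c (1/2)"]) auto
  obtain E where E: "orthonormal E" "E \<subseteq> K" "card E = Suc (card C)"
    using exists_orthonormal_subset_card[OF K nf] by blast
  have "E \<subseteq> closure S"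
    using E closure_subset unfolding orthonormal_def S_def by (force simp: norm_eq_sqrt_cinner)
  then have "\<forall>e\<in>E. \<exists>c. c \<in> C \<and> dist c e < 1/2" using C(2) by fastforce
  then obtain h where h: "\<And>e. e \<in> E \<Longrightarrow> h e \<in> C \<and> dist (h e) e < 1/2"
    by metis
  have "inj_on h E"
  proof (rule inj_onI, rule ccontr)
    fix e e' assume ee: "e \<in> E" "e' \<in> E" "h e = h e'" "e \<noteq> e'"
    have "dist e e' \<le> dist (h e) e + dist (h e) e'" by (rule dist_triangle3)
    also have "\<dots> < 1" using h[OF ee(1)] h[OF ee(2)] ee(3) by simp
    finally show False using orthonormal_dist[OF E(1) ee(1,2,4)] by simp
  qed
  then have "card E \<le> card C" using h C(1) by (intro card_inj_on_le) auto
  then show False using E(3) by simp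
qed

section \<open>Bessel sequences and the analysis operator\<close>

abbreviation analysis_sqnorm :: "(nat \<Rightarrow> 'a::complex_inner) \<Rightarrow> 'a \<Rightarrow> real" where
  "analysis_sqnorm f x \<equiv> \<Sum>n. (cmod (cinner x (f n)))\<^sup>2"

abbreviation ker_analysis :: "(nat \<Rightarrow> 'a::complex_inner) \<Rightarrow> 'a set" where
  "ker_analysis f \<equiv> {x. analysis_op f x = (\<lambda>n. 0)}"

lemma bessel_boundD:
  assumes "bessel_bound f B"
  shows "summable (\<lambda>n. (cmod (cinner x (f n)))\<^sup>2)" "analysis_sqnorm f x \<le> B * (norm x)\<^sup>2"
  using assms unfolding bessel_bound_def by auto

lemma bessel_bound_mono: "bessel_bound f B \<Longrightarrow> B \<le> B' \<Longrightarrow> bessel_bound f B'"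
  unfolding bessel_bound_def by (meson mult_right_mono order_trans zero_le_power2)

lemma analysis_sqnorm_nonneg:
  assumes "bessel_bound f B"
  shows "0 \<le> analysis_sqnorm f x"
  using suminf_nonneg[OF bessel_boundD(1)[OF assms]] by simp

lemma cmod_cinner_sq_le_analysis_sqnorm:
  assumes "bessel_bound f B"
  shows "(cmod (cinner x (f m)))\<^sup>2 \<le> analysis_sqnorm f x"
  using sum_le_suminf[OF bessel_boundD(1)[OF assms], of "{m}"] by simp

lemma analysis_sqnorm_scaleR:
  assumes "bessel_bound f B"
  shows "analysis_sqnorm f (r *\<^sub>R x) = r\<^sup>2 * analysis_sqnorm f x"
proof -
  have "(cmod (cinner (r *\<^sub>R x) (f n)))\<^sup>2 = r\<^sup>2 * (cmod (cinner x (f n)))\<^sup>2" for n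
    by (simp add: cinner_scaleR_left norm_mult power_mult_distrib)
  then show ?thesis using suminf_mult[OF bessel_boundD(1)[OF assms], of "r\<^sup>2"] by simp
qed

lemma mem_ker_analysis_iff: "x \<in> ker_analysis f \<longleftrightarrow> (\<forall>n. cinner x (f n) = 0)"
  by (simp add: analysis_op_def fun_eq_iff)

lemma csubspace_ker_analysis: "csubspace (ker_analysis f)"
  unfolding csubspace_def by (auto simp: analysis_op_def fun_eq_iff cinner_add_left cinner_scaleC_left)

lemma analysis_sqnorm_diff_ker:
  "k \<in> ker_analysis f \<Longrightarrow> analysis_sqnorm f (y - k) = analysis_sqnorm f y"
  unfolding mem_ker_analysis_iff by (simp add: cinner_diff_left)

lemma ker_analysis_eq_UNIV_if_bessel_bound_nonpos:
  assumes "bessel_bound f B" "B \<le> 0"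
  shows "ker_analysis f = UNIV"
proof -
  have "(cmod (cinner x (f n)))\<^sup>2 \<le> 0" for x n
    using cmod_cinner_sq_le_analysis_sqnorm[OF assms(1), of x n] bessel_boundD(2)[OF assms(1), of x]
      mult_nonpos_nonneg[OF assms(2) zero_le_power2, of "norm x"] by linarith
  then have "cinner x (f n) = 0" for x n by simp
  then show ?thesis by (auto simp: analysis_op_def fun_eq_iff)
qed

lemma fin_dim_ker_analysis:
  assumes "compact_operator (\<lambda>x. x - synthesis_op g (analysis_op f x))"
  shows "fin_dim (ker_analysis f)"
  by (rule fin_dim_if_compact_operator_fixes[OF csubspace_ker_analysis assms])
    (simp add: synthesis_op_def)

lemma summable_if_Cauchy_partial_sums:
  fixes h :: "nat \<Rightarrow> 'a::{real_normed_vector, complete_space}"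
  assumes "\<And>e. 0 < e \<Longrightarrow> \<exists>N. \<forall>m\<ge>N. \<forall>n\<ge>m. norm (sum h {m..<n}) < e"
  shows "summable h"
  unfolding summable_iff_convergent Cauchy_convergent_iff[symmetric]
proof (rule CauchyI)
  fix e :: real assume "0 < e"
  then obtain N where N: "\<And>m n. N \<le> m \<Longrightarrow> m \<le> n \<Longrightarrow> norm (sum h {m..<n}) < e"
    using assms by blast
  have partial: "(\<Sum>i<n. h i) - (\<Sum>i<m. h i) = sum h {m..<n}" if "m \<le> n" for m n
    using sum_diff_nat_ivl[of 0 m n h] that by (simp add: lessThan_atLeast0)
  have close: "norm ((\<Sum>i<m. h i) - (\<Sum>i<n. h i)) < e" if "N \<le> m" "m \<le> n" for m n
    using N[OF that] partial[OF that(2)] norm_minus_commute by metis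
  have "norm ((\<Sum>i<m. h i) - (\<Sum>i<n. h i)) < e" if "N \<le> m" "N \<le> n" for m n
    using close[OF that(1)] close[OF that(2)] norm_minus_commute nat_le_linear by metis
  then show "\<exists>M. \<forall>m\<ge>M. \<forall>n\<ge>M. norm ((\<Sum>i<m. h i) - (\<Sum>i<n. h i)) < e" by blast
qed

text \<open>Test \<open>z = \<Sum> c\<^sub>n g\<^sub>n\<close> against itself: \<open>\<parallel>z\<parallel>\<^sup>2 = Re \<Sum> c\<^sub>n \<langle>g\<^sub>n, z\<rangle>\<close>, and the coefficients
  \<open>\<langle>z, g\<^sub>n\<rangle>\<close> have square sum at most \<open>B \<parallel>z\<parallel>\<^sup>2\<close>.\<close>

lemma norm_sum_scaleC_le_bessel:
  fixes g :: "nat \<Rightarrow> 'a::complex_inner"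
  assumes g: "bessel_bound g B" "0 \<le> B" and F: "finite F"
  shows "norm (\<Sum>n\<in>F. c n *\<^sub>C g n) \<le> sqrt B * sqrt (\<Sum>n\<in>F. (cmod (c n))\<^sup>2)"
proof -
  define z where "z = (\<Sum>n\<in>F. c n *\<^sub>C g n)"
  define L where "L = sqrt (\<Sum>n\<in>F. (cmod (c n))\<^sup>2)"
  have L2_coeff: "L2_set (\<lambda>n. cmod (cinner z (g n))) F \<le> sqrt B * norm z"
  proof -
    have "(\<Sum>n\<in>F. (cmod (cinner z (g n)))\<^sup>2) \<le> analysis_sqnorm g z"
      by (rule sum_le_suminf[OF bessel_boundD(1)[OF g(1)] F]) simp
    also have "\<dots> \<le> B * (norm z)\<^sup>2" by (rule bessel_boundD(2)[OF g(1)])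
    finally have "sqrt (\<Sum>n\<in>F. (cmod (cinner z (g n)))\<^sup>2) \<le> sqrt (B * (norm z)\<^sup>2)"
      by (rule real_sqrt_le_mono)
    then show ?thesis by (simp add: L2_set_def real_sqrt_mult)
  qed
  have "cinner z p = (\<Sum>n\<in>F. c n * cinner (g n) p)" for p
    unfolding z_def by (simp add: cinner_sum_left cinner_scaleC_left)
  then have "(norm z)\<^sup>2 = Re (\<Sum>n\<in>F. c n * cinner (g n) z)"
    by (metis cinner_self Re_complex_of_real)
  also have "\<dots> \<le> cmod (\<Sum>n\<in>F. c n * cinner (g n) z)" by (rule complex_Re_le_cmod)
  also have "\<dots> \<le> (\<Sum>n\<in>F. cmod (c n * cinner (g n) z))" by (rule norm_sum)
  also have "\<dots> = (\<Sum>n\<in>F. \<bar>cmod (c n)\<bar> * \<bar>cmod (cinner z (g n))\<bar>)"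
    by (simp add: norm_mult cinner_commute[of "g _" z])
  also have "\<dots> \<le> L2_set (\<lambda>n. cmod (c n)) F * L2_set (\<lambda>n. cmod (cinner z (g n))) F"
    by (rule L2_set_mult_ineq)
  also have "\<dots> \<le> L * (sqrt B * norm z)"
    using mult_left_mono[OF L2_coeff, of L] by (simp add: L_def L2_set_def sum_nonneg)
  finally have "norm z * norm z \<le> (L * sqrt B) * norm z" by (simp add: power2_eq_square mult_ac)
  then have "norm z \<le> L * sqrt B"
    using mult_le_cancel_right_pos[of "norm z" "norm z" "L * sqrt B"] g(2)
    by (cases "norm z = 0") (auto simp: L_def sum_nonneg)
  then show ?thesis by (simp add: z_def L_def mult.commute)
qed

lemma summable_synthesis:
  fixes g :: "nat \<Rightarrow> 'a::{complex_inner, complete_space}"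
  assumes g: "bessel_bound g B" "0 \<le> B" and c: "summable (\<lambda>n. (cmod (c n))\<^sup>2)"
  shows "summable (\<lambda>n. c n *\<^sub>C g n)"
proof (rule summable_if_Cauchy_partial_sums)
  fix e :: real assume "0 < e"
  define \<epsilon> where "\<epsilon> = (e / (sqrt B + 1))\<^sup>2"
  have pos: "0 < sqrt B + 1" using real_sqrt_ge_zero[OF g(2)] by linarith
  then have "0 < \<epsilon>" using \<open>0 < e\<close> by (simp add: \<epsilon>_def)
  then obtain N where N: "\<And>m n. N \<le> m \<Longrightarrow> norm (\<Sum>i\<in>{m..<n}. (cmod (c i))\<^sup>2) < \<epsilon>"
    using c unfolding summable_Cauchy by blast
  have "norm (\<Sum>i\<in>{m..<n}. c i *\<^sub>C g i) < e" if "N \<le> m" for m n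
  proof -
    have "sqrt (\<Sum>i\<in>{m..<n}. (cmod (c i))\<^sup>2) \<le> sqrt \<epsilon>"
      using N[OF that, of n] by (simp add: sum_nonneg)
    then have "sqrt B * sqrt (\<Sum>i\<in>{m..<n}. (cmod (c i))\<^sup>2) \<le> sqrt B * sqrt \<epsilon>"
      by (rule mult_left_mono) (simp add: g(2))
    also have "\<dots> < (sqrt B + 1) * sqrt \<epsilon>" using \<open>0 < \<epsilon>\<close> by (simp add: distrib_right)
    also have "\<dots> = e" using \<open>0 < e\<close> pos by (simp add: \<epsilon>_def)
    finally show ?thesis using norm_sum_scaleC_le_bessel[OF g, of "{m..<n}" c] by simp
  qed
  then show "\<exists>N. \<forall>m\<ge>N. \<forall>n\<ge>m. norm (\<Sum>i\<in>{m..<n}. c i *\<^sub>C g i) < e" by blast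
qed

lemma norm_synthesis_op_le:
  fixes g :: "nat \<Rightarrow> 'a::{complex_inner, complete_space}"
  assumes g: "bessel_bound g B" "0 \<le> B" and c: "summable (\<lambda>n. (cmod (c n))\<^sup>2)"
  shows "norm (synthesis_op g c) \<le> sqrt B * sqrt (\<Sum>n. (cmod (c n))\<^sup>2)"
proof (rule LIMSEQ_le_const2)
  show "(\<lambda>m. norm (\<Sum>n<m. c n *\<^sub>C g n)) \<longlonglongrightarrow> norm (synthesis_op g c)"
    unfolding synthesis_op_def by (intro tendsto_norm summable_LIMSEQ summable_synthesis[OF g c])
  have "norm (\<Sum>n<m. c n *\<^sub>C g n) \<le> sqrt B * sqrt (\<Sum>n<m. (cmod (c n))\<^sup>2)" for m
    by (rule norm_sum_scaleC_le_bessel[OF g]) simp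
  also have "\<dots> m \<le> sqrt B * sqrt (\<Sum>n. (cmod (c n))\<^sup>2)" for m
    by (intro mult_left_mono real_sqrt_le_mono sum_le_suminf[OF c]) (simp_all add: g(2))
  finally show "\<exists>N. \<forall>m\<ge>N. norm (\<Sum>n<m. c n *\<^sub>C g n) \<le> sqrt B * sqrt (\<Sum>n. (cmod (c n))\<^sup>2)"
    by blast
qed

lemma synthesis_analysis_tendsto_0:
  fixes f g :: "nat \<Rightarrow> 'a::{complex_inner, complete_space}"
  assumes f: "bessel_bound f Bf" and g: "bessel_bound g Bg"
    and u: "(\<lambda>k. analysis_sqnorm f (u k)) \<longlonglongrightarrow> 0"
  shows "(\<lambda>k. synthesis_op g (analysis_op f (u k))) \<longlonglongrightarrow> 0"
proof (rule Lim_null_comparison)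
  have g': "bessel_bound g (max Bg 0)" by (rule bessel_bound_mono[OF g]) simp
  show "\<forall>\<^sub>F k in sequentially. norm (synthesis_op g (analysis_op f (u k)))
      \<le> sqrt (max Bg 0) * sqrt (analysis_sqnorm f (u k))"
    using norm_synthesis_op_le[OF g' _ bessel_boundD(1)[OF f]] by (simp add: analysis_op_def)
  show "(\<lambda>k. sqrt (max Bg 0) * sqrt (analysis_sqnorm f (u k))) \<longlonglongrightarrow> 0"
    using tendsto_mult_right_zero[OF tendsto_real_sqrt[OF u, unfolded real_sqrt_zero]] .
qed

lemma cinner_tendsto_0_if_analysis_sqnorm_tendsto_0:
  assumes f: "bessel_bound f B" and u: "(\<lambda>k. analysis_sqnorm f (u k)) \<longlonglongrightarrow> 0"
  shows "(\<lambda>k. cinner (u k) (f m)) \<longlonglongrightarrow> 0"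
proof (rule Lim_null_comparison)
  show "\<forall>\<^sub>F k in sequentially. norm (cinner (u k) (f m)) \<le> sqrt (analysis_sqnorm f (u k))"
    using cmod_cinner_sq_le_analysis_sqnorm[OF f] by (simp add: real_le_rsqrt)
  show "(\<lambda>k. sqrt (analysis_sqnorm f (u k))) \<longlonglongrightarrow> 0"
    using tendsto_real_sqrt[OF u] by simp
qed

lemma compact_perturbation_convergent_subseq:
  fixes S :: "'a::real_normed_vector \<Rightarrow> 'a"
  assumes T: "compact_operator (\<lambda>x. x - S x)" and u: "bounded (range u)"
    and S: "(\<lambda>n. S (u n)) \<longlonglongrightarrow> 0"
  obtains l r where "strict_mono r" "(u \<circ> r) \<longlonglongrightarrow> l"
proof -
  let ?T = "\<lambda>x. x - S x"
  have "seq_compact (closure (?T ` range u))"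
    using T u unfolding compact_operator_def by (blast intro: compact_imp_seq_compact)
  moreover have "\<forall>n. ?T (u n) \<in> closure (?T ` range u)"
    using closure_subset[of "?T ` range u"] by auto
  ultimately obtain l r where r: "strict_mono r" "((\<lambda>n. ?T (u n)) \<circ> r) \<longlonglongrightarrow> l"
    by (rule seq_compactE)
  have "(\<lambda>n. ?T (u (r n)) + S (u (r n))) \<longlonglongrightarrow> l + 0"
    using tendsto_add[OF r(2) LIMSEQ_subseq_LIMSEQ[OF S r(1)]] by (simp add: comp_def)
  then have "(u \<circ> r) \<longlonglongrightarrow> l" by (simp add: comp_def)
  with r(1) show ?thesis by (rule that)
qed

lemma no_null_analysis_sequence_orthogonal_to_ker:
  fixes f g :: "nat \<Rightarrow> 'a::{complex_inner, complete_space}"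
  assumes f: "bessel_bound f Bf" and g: "bessel_bound g Bg"
    and T: "compact_operator (\<lambda>x. x - synthesis_op g (analysis_op f x))"
    and W: "cspan W = ker_analysis f"
    and u: "\<And>k. norm (u k) = 1" "\<And>k e. e \<in> W \<Longrightarrow> cinner (u k) e = 0"
  shows "\<not> (\<lambda>k. analysis_sqnorm f (u k)) \<longlonglongrightarrow> 0"
proof
  assume u0: "(\<lambda>k. analysis_sqnorm f (u k)) \<longlonglongrightarrow> 0"
  have "bounded (range u)" using u(1) by (intro boundedI[of _ 1]) auto
  then obtain l r where r: "strict_mono r" "(u \<circ> r) \<longlonglongrightarrow> l"
    using compact_perturbation_convergent_subseq[OF T _ synthesis_analysis_tendsto_0[OF f g u0]]
    by blast
  have "(\<lambda>k. norm ((u \<circ> r) k)) \<longlonglongrightarrow> norm l" by (rule tendsto_norm[OF r(2)])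
  then have "norm l = 1" using u(1) LIMSEQ_unique[OF _ tendsto_const] by (simp add: comp_def)
  have "cinner l (f m) = 0" for m
  proof -
    have "(\<lambda>k. cinner ((u \<circ> r) k) (f m)) \<longlonglongrightarrow> 0"
      using LIMSEQ_subseq_LIMSEQ[OF cinner_tendsto_0_if_analysis_sqnorm_tendsto_0[OF f u0] r(1)]
      by (simp add: comp_def)
    then show ?thesis using tendsto_cinner_left[OF r(2)] LIMSEQ_unique by blast
  qed
  then have "l \<in> cspan W" unfolding W mem_ker_analysis_iff by blast
  moreover have "cinner l e = 0" if "e \<in> W" for e
    using tendsto_cinner_left[OF r(2), of e] u(2)[OF that] LIMSEQ_unique[OF _ tendsto_const]
    by (simp add: comp_def)
  ultimately have "cinner l l = 0" by (rule cinner_cspan_eq_0[rotated])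
  then show False using \<open>norm l = 1\<close> by (simp add: cinner_eq_zero_iff)
qed

lemma analysis_lower_bound_orthogonal_to_ker:
  fixes f g :: "nat \<Rightarrow> 'a::{complex_inner, complete_space}"
  assumes f: "bessel_bound f Bf" and g: "bessel_bound g Bg"
    and T: "compact_operator (\<lambda>x. x - synthesis_op g (analysis_op f x))"
    and W: "cspan W = ker_analysis f"
  obtains c where "0 < c" "\<And>q. (\<forall>e\<in>W. cinner q e = 0) \<Longrightarrow> c * (norm q)\<^sup>2 \<le> analysis_sqnorm f q"
proof -
  have "\<exists>c>0. \<forall>q. (\<forall>e\<in>W. cinner q e = 0) \<longrightarrow> c * (norm q)\<^sup>2 \<le> analysis_sqnorm f q"
  proof (rule ccontr)
    assume "\<not> ?thesis"
    then have small: "\<exists>q. (\<forall>e\<in>W. cinner q e = 0) \<and> analysis_sqnorm f q < c * (norm q)\<^sup>2"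
      if "0 < c" for c
      using that by (auto simp: not_le)
    have "\<exists>v. norm v = 1 \<and> (\<forall>e\<in>W. cinner v e = 0) \<and> analysis_sqnorm f v < inverse (real (Suc k))" for k
    proof -
      obtain q where q: "\<forall>e\<in>W. cinner q e = 0" "analysis_sqnorm f q < inverse (real (Suc k)) * (norm q)\<^sup>2"
        using small[of "inverse (real (Suc k))"] by auto
      then have "q \<noteq> 0" using analysis_sqnorm_nonneg[OF f, of q] by auto
      define v where "v = (1 / norm q) *\<^sub>R q"
      have "analysis_sqnorm f v = (1 / norm q)\<^sup>2 * analysis_sqnorm f q"
        unfolding v_def by (rule analysis_sqnorm_scaleR[OF f])
      also have "\<dots> < inverse (real (Suc k))"
        using q(2) \<open>q \<noteq> 0\<close> by (simp add: field_simps power2_eq_square)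
      finally show ?thesis
        using \<open>q \<noteq> 0\<close> q(1) by (intro exI[of _ v]) (simp add: v_def cinner_scaleR_left)
    qed
    then obtain u where u: "\<And>k. norm (u k) = 1" "\<And>k e. e \<in> W \<Longrightarrow> cinner (u k) e = 0"
      "\<And>k. analysis_sqnorm f (u k) < inverse (real (Suc k))"
      by metis
    have "(\<lambda>k. analysis_sqnorm f (u k)) \<longlonglongrightarrow> 0"
    proof (rule Lim_null_comparison[OF always_eventually LIMSEQ_inverse_real_of_nat])
      show "\<forall>k. norm (analysis_sqnorm f (u k)) \<le> inverse (real (Suc k))"
        using u(3) analysis_sqnorm_nonneg[OF f] by (simp add: less_imp_le)
    qed
    then show False using no_null_analysis_sequence_orthogonal_to_ker[OF f g T W, of u] u(1,2) by blast
  qed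
  then show ?thesis using that by blast
qed

section \<open>Completing a Bessel sequence to a frame\<close>

lemma fin_dim_orthonormal_basis:
  assumes "fin_dim K"
  obtains E where "orthonormal E" "cspan E = K"
  using assms gram_schmidt unfolding fin_dim_def by metis

lemma frame_prepend_orthogonal_eq_0:
  assumes fr: "frame (prepend_seq k x f)"
    and x: "\<And>j. j < k \<Longrightarrow> cinner z (x j) = 0" and f: "\<And>n. cinner z (f n) = 0"
  shows "z = 0"
proof -
  obtain A where A: "0 < A" "A * (norm z)\<^sup>2 \<le> (\<Sum>n. (cmod (cinner z (prepend_seq k x f n)))\<^sup>2)"
    using fr unfolding frame_def by blast
  have "(\<lambda>n. (cmod (cinner z (prepend_seq k x f n)))\<^sup>2) = (\<lambda>n. 0)"
    using x f by (auto simp: prepend_seq_def)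
  then have "A * (norm z)\<^sup>2 \<le> 0" using A(2) by simp
  then show ?thesis using A(1) by (simp add: mult_le_0_iff)
qed

lemma cdim_le_if_frame_prepend:
  assumes fr: "frame (prepend_seq k x f)" and K: "csubspace K" "fin_dim K"
    and Kf: "\<And>y n. y \<in> K \<Longrightarrow> cinner y (f n) = 0"
  shows "cdim K \<le> k"
proof -
  obtain E where E: "orthonormal E" "cspan E = K" using fin_dim_orthonormal_basis[OF K(2)] .
  have fE: "finite E" using E(1) unfolding orthonormal_def by simp
  define S where "S = (\<lambda>j. proj E (x j)) ` {..<k}"
  have S: "finite S" "S \<subseteq> K" unfolding S_def using proj_in_cspan[OF fE] E(2) by auto
  have "cspan S = K"
  proof (rule ccontr)
    assume "cspan S \<noteq> K"
    then obtain z where z: "z \<in> K" "z \<noteq> 0" "\<And>s. s \<in> S \<Longrightarrow> cinner z s = 0"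
      using exists_orthogonal_in_csubspace[OF K(1) S] by blast
    have "cinner z (x j) = 0" if "j < k" for j
    proof -
      have "cinner (x j - proj E (x j)) z = 0"
        using cinner_cspan_eq_0[of E "x j - proj E (x j)" z] cinner_proj_residual[OF E(1)] z(1) E(2)
        by blast
      moreover have "cinner z (proj E (x j)) = 0" using z(3) that unfolding S_def by blast
      ultimately show ?thesis
        using cinner_eq_0_sym[of "x j - proj E (x j)" z] by (simp add: cinner_diff_right)
    qed
    then have "z = 0" using frame_prepend_orthogonal_eq_0[OF fr] Kf[OF z(1)] by blast
    with z(2) show False ..
  qed
  then have "cdim K \<le> card S" using cdim_le_card S by blast
  also have "card S \<le> k" unfolding S_def using card_image_le[of "{..<k}"] by simp
  finally show ?thesis .
qed

lemma prepend_seq_sums: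
  assumes "summable (\<lambda>n. (cmod (cinner y (f n)))\<^sup>2)"
  shows "(\<lambda>n. (cmod (cinner y (prepend_seq d x f n)))\<^sup>2)
    sums (analysis_sqnorm f y + (\<Sum>i<d. (cmod (cinner y (x i)))\<^sup>2))"
proof -
  have "(\<lambda>n. (cmod (cinner y (prepend_seq d x f (n + d))))\<^sup>2) sums analysis_sqnorm f y"
    using summable_sums[OF assms] by (simp add: prepend_seq_def)
  moreover have "(\<Sum>i<d. (cmod (cinner y (prepend_seq d x f i)))\<^sup>2) = (\<Sum>i<d. (cmod (cinner y (x i)))\<^sup>2)"
    by (rule sum.cong) (simp_all add: prepend_seq_def)
  ultimately show ?thesis
    using sums_iff_shift[of "\<lambda>n. (cmod (cinner y (prepend_seq d x f n)))\<^sup>2" d] by simp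
qed

lemma orthonormal_basis_ofD:
  assumes "orthonormal_basis_of d w K"
  shows "orthonormal (w ` {..<d})" "inj_on w {..<d}" "cspan (w ` {..<d}) = K"
proof -
  have on: "\<forall>i<d. \<forall>j<d. cinner (w i) (w j) = (if i = j then 1 else 0)"
    using assms unfolding orthonormal_basis_of_def by blast
  show "orthonormal (w ` {..<d})" using on unfolding orthonormal_def by auto
  show "inj_on w {..<d}" using on by (intro inj_onI) (metis lessThan_iff zero_neq_one)
  show "cspan (w ` {..<d}) = K" using assms unfolding orthonormal_basis_of_def by blast
qed

text \<open>Splitting \<open>y\<close> into its components in and orthogonal to the kernel: the first is seen
  by the added vectors with weight \<open>B\<close>, the second by the \<open>f n\<close> with weight at least \<open>c\<close>.\<close>

lemma lower_frame_bound_prepend: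
  assumes f: "bessel_bound f B" and W: "orthonormal W" "cspan W = ker_analysis f"
    and c: "\<And>q. (\<forall>e\<in>W. cinner q e = 0) \<Longrightarrow> c * (norm q)\<^sup>2 \<le> analysis_sqnorm f q"
  shows "min B c * (norm y)\<^sup>2 \<le> analysis_sqnorm f y + B * (\<Sum>e\<in>W. (cmod (cinner y e))\<^sup>2)"
proof -
  define P where "P = (\<Sum>e\<in>W. (cmod (cinner y e))\<^sup>2)"
  define q where "q = y - proj W y"
  have fW: "finite W" using W(1) unfolding orthonormal_def by simp
  have decomp: "(norm y)\<^sup>2 = P + (norm q)\<^sup>2"
    unfolding P_def q_def by (rule norm_sq_proj_decomp[OF W(1)])
  have "analysis_sqnorm f q = analysis_sqnorm f y"
    unfolding q_def using proj_in_cspan[OF fW] W(2) by (simp add: analysis_sqnorm_diff_ker)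
  moreover have "c * (norm q)\<^sup>2 \<le> analysis_sqnorm f q"
    unfolding q_def by (rule c) (use cinner_proj_residual[OF W(1)] in blast)
  ultimately have cq: "c * (norm q)\<^sup>2 \<le> analysis_sqnorm f y" by simp
  have "min B c * (norm y)\<^sup>2 = min B c * P + min B c * (norm q)\<^sup>2"
    unfolding decomp by (simp add: distrib_left)
  also have "\<dots> \<le> B * P + c * (norm q)\<^sup>2"
    by (intro add_mono mult_right_mono) (simp_all add: P_def sum_nonneg)
  finally show ?thesis using cq unfolding P_def by linarith
qed

lemma frame_prepend_scaled_orthonormal_basis:
  assumes f: "bessel_bound f B" and B: "0 < B"
    and w: "orthonormal_basis_of d w (ker_analysis f)"
    and c: "0 < c" "\<And>q. (\<forall>e\<in>w ` {..<d}. cinner q e = 0) \<Longrightarrow> c * (norm q)\<^sup>2 \<le> analysis_sqnorm f q"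
  shows "frame (prepend_seq d (\<lambda>n. sqrt B *\<^sub>R w n) f)"
proof -
  define W where "W = w ` {..<d}"
  note W = orthonormal_basis_ofD[OF w, folded W_def]
  have sums: "(\<lambda>n. (cmod (cinner y (prepend_seq d (\<lambda>n. sqrt B *\<^sub>R w n) f n)))\<^sup>2)
      sums (analysis_sqnorm f y + B * (\<Sum>e\<in>W. (cmod (cinner y e))\<^sup>2))" for y
  proof -
    have "(\<Sum>i<d. (cmod (cinner y (sqrt B *\<^sub>R w i)))\<^sup>2) = B * (\<Sum>i<d. (cmod (cinner y (w i)))\<^sup>2)"
      using B by (simp add: cinner_scaleR_right norm_mult power_mult_distrib sum_distrib_left)
    also have "\<dots> = B * (\<Sum>e\<in>W. (cmod (cinner y e))\<^sup>2)" by (simp add: W_def sum.reindex[OF W(2)])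
    finally show ?thesis using prepend_seq_sums[OF bessel_boundD(1)[OF f]] by metis
  qed
  have upper: "analysis_sqnorm f y + B * (\<Sum>e\<in>W. (cmod (cinner y e))\<^sup>2) \<le> 2 * B * (norm y)\<^sup>2" for y
  proof -
    have "B * (\<Sum>e\<in>W. (cmod (cinner y e))\<^sup>2) \<le> B * (norm y)\<^sup>2"
      using B by (intro mult_left_mono bessel_inequality_finite[OF W(1)]) simp
    then show ?thesis using bessel_boundD(2)[OF f, of y] by linarith
  qed
  have lower: "min B c * (norm y)\<^sup>2 \<le> analysis_sqnorm f y + B * (\<Sum>e\<in>W. (cmod (cinner y e))\<^sup>2)" for y
    using lower_frame_bound_prepend[OF f W(1,3)] c(2) unfolding W_def by blast
  show ?thesis unfolding frame_def
    using sums_summable[OF sums] sums_unique[OF sums] upper lower B c(1)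
    by (intro exI[of _ "min B c"] exI[of _ "2 * B"]) auto
qed

theorem mainTheorem4:
  fixes f :: "nat \<Rightarrow> 'a::{complex_inner, complete_space}" and B :: real
  assumes sep: "separable_space TYPE('a)"
    and infdim: "infinite_dimensional TYPE('a)"
    and bessel: "bessel_seq f"
    and optB: "optimal_bessel_bound f B"
    and compact: "\<exists>g. bessel_seq g \<and>
                    compact_operator (\<lambda>x. x - synthesis_op g (analysis_op f x))"
  shows "fin_dim {x. analysis_op f x = (\<lambda>n. 0)}
    \<and> (\<forall>k (x :: nat \<Rightarrow> 'a). frame (prepend_seq k x f) \<longrightarrow>
          cdim {x. analysis_op f x = (\<lambda>n. 0)} \<le> k)
    \<and> (\<forall>w. orthonormal_basis_of (cdim {x. analysis_op f x = (\<lambda>n. 0)}) w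
                                {x. analysis_op f x = (\<lambda>n. 0)} \<longrightarrow>
          frame (prepend_seq (cdim {x. analysis_op f x = (\<lambda>n. 0)})
                   (\<lambda>n. sqrt B *\<^sub>R w n) f))"
proof -
  obtain g where g: "bessel_seq g" "compact_operator (\<lambda>x. x - synthesis_op g (analysis_op f x))"
    using compact by blast
  obtain Bg where bg: "bessel_bound g Bg" using g(1) unfolding bessel_seq_def by blast
  have bf: "bessel_bound f B" using optB unfolding optimal_bessel_bound_def by blast
  have fd: "fin_dim (ker_analysis f)" by (rule fin_dim_ker_analysis[OF g(2)])
  have "0 < B"
  proof (rule ccontr)
    assume "\<not> 0 < B"
    then have "ker_analysis f = UNIV" by (intro ker_analysis_eq_UNIV_if_bessel_bound_nonpos[OF bf]) simp
    with fd infdim show False unfolding infinite_dimensional_def by simp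
  qed
  have dim_bound: "cdim (ker_analysis f) \<le> k" if "frame (prepend_seq k x f)" for k and x :: "nat \<Rightarrow> 'a"
    using cdim_le_if_frame_prepend[OF that csubspace_ker_analysis fd] mem_ker_analysis_iff by blast
  have frame: "frame (prepend_seq d (\<lambda>n. sqrt B *\<^sub>R w n) f)"
    if w: "orthonormal_basis_of d w (ker_analysis f)" for d w
  proof -
    obtain c where "0 < c"
      "\<And>q. (\<forall>e\<in>w ` {..<d}. cinner q e = 0) \<Longrightarrow> c * (norm q)\<^sup>2 \<le> analysis_sqnorm f q"
      using analysis_lower_bound_orthogonal_to_ker[OF bf bg g(2) orthonormal_basis_ofD(3)[OF w]] by blast
    then show ?thesis using frame_prepend_scaled_orthonormal_basis[OF bf \<open>0 < B\<close> w] by blast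
  qed
  show ?thesis using fd dim_bound frame by blast
qed

end
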